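(* For every $\alpha,\beta\in\mathcal W(\tau_\lambda;\mathbb Z)$, $Z_\alpha Z_\beta=\omega^{2\Theta(\alpha,\beta)}Z_{\alpha+\beta}$ in $\mathcal Z^\omega(\lambda)$. In particular $Z_\alpha Z_\beta=\omega^{4\Theta(\alpha,\beta)}Z_\beta Z_\alpha$.
   Context: $S$ is a closed oriented surface $\bar S$ of genus $g$ minus $s\ge1$ points, $2-2g-s<0$; $\lambda$ is an ideal triangulation (triangulation of $\bar S$ with vertices exactly the removed points) with edges $\lambda_1,\dots,\lambda_n$. Let $a_{ij}\in\{0,1,2\}$ be the number of times an end of $\lambda_j$ immediately succeeds an end of $\lambda_i$ going counterclockwise around a puncture, $\sigma_{ij}=a_{ij}-a_{ji}$. For $\omega\in\mathbb C-\{0\}$, $\mathcal T^\omega(\lambda)$ is generated by $Z_i^{\pm1}$ with relations $Z_iZ_j=\omega^{2\sigma_{ij}}Z_jZ_i$; Weyl ordering $[Z_{i_1}^{n_1}\cdots Z_{i_l}^{n_l}]=\omega^{-\sum_{u<v}n_un_v\sigma_{i_ui_v}}Z_{i_1}^{n_1}\cdots Z_{i_l}^{n_l}$. $\mathcal Z^\omega(\lambda)$ is the subalgebra generated by monomials $Z_1^{k_1}\cdots Z_n^{k_n}$ such that $k_{i_1}+k_{i_2}+k_{i_3}$ is even for the sides $\lambda_{i_1},\lambda_{i_2},\lambda_{i_3}$ of every face. $\tau_\lambda$ is the train track which in each face of $\lambda$ consists of three arcs each joining two sides and turning around the corner between them, with one switch on each edge $\lambda_i$. $\mathcal W(\tau_\lambda;\mathbb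 Z)$ is the group of integer edge weights on $\tau_\lambda$ satisfying the switch conditions; $\alpha_i$ is the total weight on one side of the switch on $\lambda_i$, and $Z_\alpha=[Z_1^{\alpha_1}\cdots Z_n^{\alpha_n}]$. Thurston intersection form: $\Theta(\alpha,\beta)=\frac12\sum_{(e,e')}\bigl(\alpha(e)\beta(e')-\alpha(e')\beta(e)\bigr)$, the sum over all pairs $(e,e')$ of (germs of) edges of $\tau_\lambda$ emerging on the same side of a switch with $e$ to the right of $e'$ (not necessarily adjacent); $\Theta(\alpha,\beta)$ is an integer. *)

theory Defs
  imports Complex_Main
begin

text \<open>An ideal triangulation lambda with edges indexed 0..n-1 (the paper's lambda_1..lambda_n)
is encoded by its finite nonempty set of faces F and, for each face f, the three sides
side f 0, side f 1, side f 2 (edge indices), listed in the order in which they are met when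
running along the boundary of the face counterclockwise (w.r.t. the orientation of the
surface). Positions are taken mod 3. Every edge borders exactly two face-sides (the surface
is obtained by gluing the face-sides in pairs, orientation-reversingly), and the surface is
connected. Corner c of face f is the corner between sides c and c+1 (mod 3).\<close>

definition nxt :: "nat \<Rightarrow> nat" where "nxt k = Suc k mod 3"
definition prv :: "nat \<Rightarrow> nat" where "prv k = (k + 2) mod 3"

definition face_sides :: "'f set \<Rightarrow> ('f \<Rightarrow> nat \<Rightarrow> nat) \<Rightarrow> nat \<Rightarrow> ('f \<times> nat) set" where
  "face_sides F side i = {(f, k). f \<in> F \<and> k < 3 \<and> side f k = i}"

definition face_adj :: "'f set \<Rightarrow> ('f \<Rightarrow> nat \<Rightarrow> nat) \<Rightarrow> 'f \<Rightarrow> 'f \<Rightarrow> bool" where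
  "face_adj F side f g \<longleftrightarrow> f \<in> F \<and> g \<in> F \<and> (\<exists>k<3. \<exists>l<3. side f k = side g l)"

definition ideal_triangulation :: "nat \<Rightarrow> 'f set \<Rightarrow> ('f \<Rightarrow> nat \<Rightarrow> nat) \<Rightarrow> bool" where
  "ideal_triangulation n F side \<longleftrightarrow>
     finite F \<and> F \<noteq> {} \<and>
     (\<forall>f\<in>F. \<forall>k<3. side f k < n) \<and>
     (\<forall>i<n. card (face_sides F side i) = 2) \<and>
     (\<forall>f\<in>F. \<forall>g\<in>F. (face_adj F side)\<^sup>*\<^sup>* f g)"

text \<open>a_ij: number of times an end of lambda_j immediately succeeds an end of lambda_i going
counterclockwise around a puncture. In corner c of face f, going counterclockwise around the
vertex, the end of side f c succeeds the end of side f (c+1).\<close>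

definition a_coef :: "'f set \<Rightarrow> ('f \<Rightarrow> nat \<Rightarrow> nat) \<Rightarrow> nat \<Rightarrow> nat \<Rightarrow> int" where
  "a_coef F side i j = int (card {(f, c). f \<in> F \<and> c < 3 \<and> side f (nxt c) = i \<and> side f c = j})"

definition sigma :: "'f set \<Rightarrow> ('f \<Rightarrow> nat \<Rightarrow> nat) \<Rightarrow> nat \<Rightarrow> nat \<Rightarrow> int" where
  "sigma F side i j = a_coef F side i j - a_coef F side j i"

text \<open>The edges of tau_lambda are the corner arcs (f, c), f in F, c < 3 (arc of face f turning
around corner c, joining sides c and c+1). A weight is a function w :: 'f => nat => int
(only its values on arcs matter). The switch on edge i has two sides, namely the two
face-sides (f,k) with side f k = i; the germs emerging on the side (f,k) are those of the
arcs (f, k-1) and (f, k); their total weight is sw w f k.\<close>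

definition sw :: "('f \<Rightarrow> nat \<Rightarrow> int) \<Rightarrow> 'f \<Rightarrow> nat \<Rightarrow> int" where
  "sw w f k = w f (prv k) + w f k"

definition tt_weight :: "'f set \<Rightarrow> ('f \<Rightarrow> nat \<Rightarrow> nat) \<Rightarrow> ('f \<Rightarrow> nat \<Rightarrow> int) \<Rightarrow> bool" where
  "tt_weight F side w \<longleftrightarrow>
     (\<forall>f\<in>F. \<forall>k<3. \<forall>g\<in>F. \<forall>l<3. side f k = side g l \<longrightarrow> sw w f k = sw w g l)"

text \<open>alpha_i: total weight on one side of the switch on lambda_i.\<close>
definition tt_alpha :: "'f set \<Rightarrow> ('f \<Rightarrow> nat \<Rightarrow> nat) \<Rightarrow> ('f \<Rightarrow> nat \<Rightarrow> int) \<Rightarrow> nat \<Rightarrow> int" where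
  "tt_alpha F side w i = (let (f, k) = (SOME p. p \<in> face_sides F side i) in sw w f k)"

definition wadd :: "('f \<Rightarrow> nat \<Rightarrow> int) \<Rightarrow> ('f \<Rightarrow> nat \<Rightarrow> int) \<Rightarrow> 'f \<Rightarrow> nat \<Rightarrow> int" where
  "wadd a b = (\<lambda>f c. a f c + b f c)"

text \<open>On the side (f,k) of a switch there are exactly two germs; looking from
the switch into the face f, the germ of the arc (f,k) (around the corner at the end of side k
reached last when running counterclockwise along the boundary of f) is to the right of the
germ of the arc (f, k-1). thurston2 is TWICE the Thurston form, i.e. 2 Theta(alpha, beta),
which is an integer by definition (the sum without the factor 1/2).\<close>

definition thurston2 :: "'f set \<Rightarrow> ('f \<Rightarrow> nat \<Rightarrow> int) \<Rightarrow> ('f \<Rightarrow> nat \<Rightarrow> int) \<Rightarrow> int" where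
  "thurston2 F a b = (\<Sum>f\<in>F. \<Sum>k<3. a f k * b f (prv k) - a f (prv k) * b f k)"

text \<open>T^omega(lambda) is presented by generators and relations; we work in an arbitrary
complex algebra A (a ring with a ring homomorphism sc from the complex numbers into its
centre) containing invertible elements Z_i (with inverses Zi i) satisfying the relations
Z_i Z_j = omega^(2 sigma_ij) Z_j Z_i. By the universal property of the presentation this
is equivalent to working in T^omega(lambda) itself.\<close>

definition is_scalar_hom :: "(complex \<Rightarrow> 'a::ring_1) \<Rightarrow> bool" where
  "is_scalar_hom sc \<longleftrightarrow> sc 1 = 1 \<and> (\<forall>x y. sc (x + y) = sc x + sc y) \<and>
     (\<forall>x y. sc (x * y) = sc x * sc y) \<and> (\<forall>x z. sc x * z = z * sc x)"

definition zpow :: "(nat \<Rightarrow> 'a::ring_1) \<Rightarrow> (nat \<Rightarrow> 'a) \<Rightarrow> nat \<Rightarrow> int \<Rightarrow> 'a" where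
  "zpow Z Zi i k = (if 0 \<le> k then Z i ^ nat k else Zi i ^ nat (- k))"

definition monom :: "nat \<Rightarrow> (nat \<Rightarrow> 'a::ring_1) \<Rightarrow> (nat \<Rightarrow> 'a) \<Rightarrow> (nat \<Rightarrow> int) \<Rightarrow> 'a" where
  "monom n Z Zi k = prod_list (map (\<lambda>i. zpow Z Zi i (k i)) [0..<n])"

definition weyl :: "(complex \<Rightarrow> 'a::ring_1) \<Rightarrow> complex \<Rightarrow> (nat \<Rightarrow> nat \<Rightarrow> int) \<Rightarrow> nat \<Rightarrow>
    (nat \<Rightarrow> 'a) \<Rightarrow> (nat \<Rightarrow> 'a) \<Rightarrow> (nat \<Rightarrow> int) \<Rightarrow> 'a" where
  "weyl sc \<omega> \<sigma> n Z Zi k =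
     sc (\<omega> powi (- (\<Sum>u<n. \<Sum>v\<in>{u<..<n}. k u * k v * \<sigma> u v))) * monom n Z Zi k"

text \<open>Exponent vectors of the monomials generating the balanced subalgebra Z^omega(lambda).\<close>
definition balanced :: "'f set \<Rightarrow> ('f \<Rightarrow> nat \<Rightarrow> nat) \<Rightarrow> (nat \<Rightarrow> int) \<Rightarrow> bool" where
  "balanced F side k \<longleftrightarrow> (\<forall>f\<in>F. even (k (side f 0) + k (side f 1) + k (side f 2)))"

end

theory Submission
  imports Defs
begin

text \<open>
  Multiplying two Weyl-ordered monomials and reordering the product into ordered form costs
  the exponent twice the strictly lower-triangular part of \<open>\<Sum>\<^sub>i\<^sub>j \<alpha>\<^sub>i \<beta>\<^sub>j \<sigma>\<^sub>i\<^sub>j\<close>; together with the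
  Weyl normalisations and the antisymmetry of \<open>\<sigma>\<close> this leaves exactly
  \<open>\<omega>^(\<Sum>\<^sub>i\<^sub>j \<alpha>\<^sub>i \<beta>\<^sub>j \<sigma>\<^sub>i\<^sub>j)\<close>. Since \<open>a\<^sub>i\<^sub>j\<close> counts corners of faces, this double sum is a sum over
  corners; writing each switch value \<open>\<alpha>\<^sub>i\<close> as the sum of the weights of the two corner arcs
  of a face that meet \<open>\<lambda>\<^sub>i\<close>, the contribution of every face becomes its part of \<open>2\<Theta>(\<alpha>,\<beta>)\<close>.
  The same description of \<open>\<alpha>\<close> shows that its sum over the sides of a face is even.
\<close>

locale central_character =
  fixes q :: "int \<Rightarrow> 'a::ring_1"
  assumes q_0 [simp]: "q 0 = 1"
    and q_add: "q (k + m) = q k * q m"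
    and q_central: "q m * x = x * q m"
begin

lemma q_left_commute: "x * (q m * y) = q m * (x * y)"
  by (metis mult.assoc q_central)

lemma q_q_mult: "q k * (q m * y) = q (k + m) * y"
  by (simp add: q_add mult.assoc)

definition qcommute :: "'a \<Rightarrow> 'a \<Rightarrow> int \<Rightarrow> bool" where
  "qcommute x y m \<longleftrightarrow> x * y = q m * y * x"

lemma qcommute_one_right: "qcommute x 1 0"
  by (simp add: qcommute_def)

lemma qcommute_swap:
  assumes "qcommute x y m" shows "y * x = q (- m) * x * y"
proof -
  have "q (- m) * x * y = q (- m) * (q m * y * x)"
    using assms by (simp add: qcommute_def mult.assoc)
  then show ?thesis by (simp add: mult.assoc q_q_mult)
qed

lemma qcommute_power_left:
  assumes "qcommute x y m" shows "qcommute (x ^ p) y (int p * m)"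
proof (induction p)
  case (Suc p)
  have "x ^ Suc p * y = x * (x ^ p * y)" by (simp add: mult.assoc)
  also have "\<dots> = q (int p * m) * (x * y) * x ^ p"
    using Suc by (simp add: qcommute_def mult.assoc q_left_commute[of x])
  also have "\<dots> = q (int p * m) * (q m * y * x) * x ^ p"
    using assms by (simp add: qcommute_def)
  also have "\<dots> = q (int (Suc p) * m) * y * x ^ Suc p"
    by (simp add: mult.assoc q_q_mult algebra_simps)
  finally show ?case by (simp add: qcommute_def)
qed (simp add: qcommute_def)

lemma qcommute_power_right:
  assumes "qcommute x y m" shows "qcommute x (y ^ p) (int p * m)"
proof (induction p)
  case (Suc p)
  have "x * y ^ Suc p = (x * y) * y ^ p" by (simp add: mult.assoc)
  also have "\<dots> = q m * y * (x * y ^ p)"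
    using assms by (simp add: qcommute_def mult.assoc)
  also have "\<dots> = q m * y * (q (int p * m) * y ^ p * x)"
    using Suc by (simp add: qcommute_def)
  also have "\<dots> = q (int (Suc p) * m) * y ^ Suc p * x"
    by (simp add: mult.assoc q_left_commute[of y] q_q_mult algebra_simps)
  finally show ?case by (simp add: qcommute_def)
qed (simp add: qcommute_def)

lemma qcommute_inverse_left:
  assumes "qcommute x y m" "x * x' = 1" "x' * x = 1"
  shows "qcommute x' y (- m)"
proof -
  have "x' * y = x' * (y * x) * x'" using assms(2) by (simp add: mult.assoc)
  also have "\<dots> = q (- m) * ((x' * x) * y * x')"
    by (simp add: qcommute_swap[OF assms(1)] mult.assoc q_left_commute[of x'])
  finally show ?thesis using assms(3) by (simp add: qcommute_def mult.assoc)
qed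

lemma qcommute_inverse_right:
  assumes "qcommute x y m" "y * y' = 1" "y' * y = 1"
  shows "qcommute x y' (- m)"
proof -
  have "x * y' = (y' * y) * x * y'" using assms(3) by simp
  also have "\<dots> = y' * (y * x) * y'" by (simp add: mult.assoc)
  also have "\<dots> = q (- m) * (y' * x * (y * y'))"
    by (simp add: qcommute_swap[OF assms(1)] mult.assoc q_left_commute[of y'])
  finally show ?thesis using assms(2) by (simp add: qcommute_def mult.assoc)
qed

lemma qcommute_zpow_left:
  assumes "qcommute (Z i) y m" "Z i * Zi i = 1" "Zi i * Z i = 1"
  shows "qcommute (zpow Z Zi i p) y (p * m)"
proof (cases "0 \<le> p")
  case True
  then show ?thesis using qcommute_power_left[OF assms(1), of "nat p"] by (simp add: zpow_def)
next
  case False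
  then show ?thesis
    using qcommute_power_left[OF qcommute_inverse_left[OF assms], of "nat (- p)"]
    by (simp add: zpow_def)
qed

lemma qcommute_zpow_right:
  assumes "qcommute x (Z j) m" "Z j * Zi j = 1" "Zi j * Z j = 1"
  shows "qcommute x (zpow Z Zi j p) (p * m)"
proof (cases "0 \<le> p")
  case True
  then show ?thesis using qcommute_power_right[OF assms(1), of "nat p"] by (simp add: zpow_def)
next
  case False
  then show ?thesis
    using qcommute_power_right[OF qcommute_inverse_right[OF assms], of "nat (- p)"]
    by (simp add: zpow_def)
qed

lemma qcommute_mult_right:
  assumes "qcommute x y k" "qcommute x z m"
  shows "qcommute x (y * z) (k + m)"
proof -
  have "x * (y * z) = (x * y) * z" by (simp add: mult.assoc)
  also have "\<dots> = q k * y * (x * z)" using assms(1) by (simp add: qcommute_def mult.assoc)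
  also have "\<dots> = q k * y * (q m * z * x)" using assms(2) by (simp add: qcommute_def)
  also have "\<dots> = q (k + m) * (y * z) * x"
    by (simp add: mult.assoc q_left_commute[of y] q_q_mult)
  finally show ?thesis by (simp add: qcommute_def)
qed

end

lemma zpow_succ:
  assumes "Zi i * Z i = 1"
  shows "zpow Z Zi i (p + 1) = zpow Z Zi i p * Z i"
proof (cases "0 \<le> p")
  case True
  then have "nat (p + 1) = Suc (nat p)" by simp
  with True show ?thesis by (simp add: zpow_def power_commutes)
next
  case False
  then have "zpow Z Zi i (p + 1) = Zi i ^ nat (- (p + 1))"
    by (cases "p = - 1") (auto simp: zpow_def)
  moreover have "nat (- p) = Suc (nat (- (p + 1)))" using False by simp
  moreover have "Zi i ^ Suc k * Z i = Zi i ^ k" for k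
    using assms by (simp only: power_Suc2 mult.assoc mult_1_right)
  ultimately show ?thesis
    using False by (simp add: zpow_def)
qed

lemma zpow_add:
  assumes "Z i * Zi i = 1" "Zi i * Z i = 1"
  shows "zpow Z Zi i p * zpow Z Zi i r = zpow Z Zi i (p + r)"
proof (induction r rule: int_induct[where k = 0])
  case base
  then show ?case by (simp add: zpow_def)
next
  case (step1 r)
  then show ?case
    by (simp add: zpow_succ[where Z = Z and Zi = Zi and i = i, OF assms(2)]
        mult.assoc[symmetric] add.assoc[symmetric])
next
  case (step2 r)
  have pred: "zpow Z Zi i (s - 1) = zpow Z Zi i s * Zi i" for s
    using zpow_succ[where Z = Z and Zi = Zi and i = i and p = "s - 1", OF assms(2)] assms(1)
    by (simp add: mult.assoc)
  from step2 show ?case by (simp add: pred mult.assoc[symmetric] add_diff_eq)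
qed

lemma central_character_powi:
  assumes "is_scalar_hom sc" "\<omega> \<noteq> 0"
  shows "central_character (\<lambda>m. sc (\<omega> powi m))"
proof unfold_locales
  from assms(1) have hom: "sc 1 = 1" "\<And>x y. sc (x * y) = sc x * sc y"
    and central: "\<And>x z. sc x * z = z * sc x"
    unfolding is_scalar_hom_def by blast+
  show "sc (\<omega> powi 0) = 1" using hom(1) by simp
  show "sc (\<omega> powi (k + m)) = sc (\<omega> powi k) * sc (\<omega> powi m)" for k m
    using assms(2) by (simp add: hom(2)[symmetric] power_int_add)
  show "sc (\<omega> powi m) * x = x * sc (\<omega> powi m)" for m x by (rule central)
qed

lemma monom_Suc: "monom (Suc m) Z Zi k = monom m Z Zi k * zpow Z Zi m (k m)"
  by (simp add: monom_def)

definition weyl_exponent :: "(nat \<Rightarrow> nat \<Rightarrow> int) \<Rightarrow> nat \<Rightarrow> (nat \<Rightarrow> int) \<Rightarrow> int" where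
  "weyl_exponent \<sigma> m k = (\<Sum>u<m. \<Sum>v\<in>{u<..<m}. k u * k v * \<sigma> u v)"

lemma weyl_exponent_Suc:
  "weyl_exponent \<sigma> (Suc m) k = weyl_exponent \<sigma> m k + (\<Sum>u<m. k u * k m * \<sigma> u m)"
proof -
  have "(\<Sum>v\<in>{u<..<Suc m}. k u * k v * \<sigma> u v)
      = k u * k m * \<sigma> u m + (\<Sum>v\<in>{u<..<m}. k u * k v * \<sigma> u v)" if "u < m" for u
  proof -
    from that have "{u<..<Suc m} = insert m {u<..<m}" by auto
    then show ?thesis by simp
  qed
  moreover have "{m<..<Suc m} = {}" by auto
  ultimately show ?thesis by (simp add: weyl_exponent_def sum.distrib)
qed

lemma weyl_exponent_add:
  assumes antisym: "\<And>i j. \<sigma> i j = - \<sigma> j i"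
  shows "weyl_exponent \<sigma> m (\<lambda>i. k i + l i) - weyl_exponent \<sigma> m k - weyl_exponent \<sigma> m l
     = (\<Sum>i<m. \<Sum>j<m. k i * l j * \<sigma> i j) - 2 * (\<Sum>i<m. \<Sum>j<i. k i * l j * \<sigma> i j)"
proof (induction m)
  case 0
  show ?case by (simp add: weyl_exponent_def)
next
  case (Suc m)
  have diag: "\<sigma> m m = 0" using antisym[of m m] by simp
  have "(\<Sum>j<m. k m * l j * \<sigma> m j) = - (\<Sum>j<m. l j * k m * \<sigma> j m)"
    by (simp add: sum_negf[symmetric] antisym[of m] mult_ac)
  with Suc diag show ?case
    by (simp add: weyl_exponent_Suc sum.distrib sum_distrib_left algebra_simps)
qed

locale quantum_torus = central_character q for q :: "int \<Rightarrow> 'a::ring_1" +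
  fixes n :: nat and Z Zi :: "nat \<Rightarrow> 'a" and \<sigma> :: "nat \<Rightarrow> nat \<Rightarrow> int"
  assumes Z_Zi: "i < n \<Longrightarrow> Z i * Zi i = 1"
    and Zi_Z: "i < n \<Longrightarrow> Zi i * Z i = 1"
    and Z_commute: "i < n \<Longrightarrow> j < n \<Longrightarrow> Z i * Z j = q (2 * \<sigma> i j) * Z j * Z i"
begin

lemma qcommute_zpow:
  assumes "i < n" "j < n"
  shows "qcommute (zpow Z Zi i p) (zpow Z Zi j r) (p * r * (2 * \<sigma> i j))"
proof -
  have "qcommute (Z i) (Z j) (2 * \<sigma> i j)"
    using Z_commute[OF assms] by (simp add: qcommute_def)
  from qcommute_zpow_right[where Z = Z and Zi = Zi and j = j,
      OF qcommute_zpow_left[where Z = Z and Zi = Zi and i = i, OF this] Z_Zi Zi_Z] assms Z_Zi Zi_Z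
  show ?thesis by (simp add: mult_ac)
qed

lemma qcommute_zpow_monom:
  assumes "i < n" "m \<le> n"
  shows "qcommute (zpow Z Zi i p) (monom m Z Zi l) (\<Sum>j<m. p * l j * (2 * \<sigma> i j))"
  using assms(2)
proof (induction m)
  case 0
  show ?case by (simp add: monom_def qcommute_one_right)
next
  case (Suc m)
  have "qcommute (zpow Z Zi i p) (monom m Z Zi l * zpow Z Zi m (l m))
      ((\<Sum>j<m. p * l j * (2 * \<sigma> i j)) + p * l m * (2 * \<sigma> i m))"
    using Suc assms(1) by (intro qcommute_mult_right qcommute_zpow) auto
  then show ?case by (simp add: monom_Suc)
qed

lemma monom_mult:
  assumes "m \<le> n"
  shows "monom m Z Zi k * monom m Z Zi l
     = q (2 * (\<Sum>i<m. \<Sum>j<i. k i * l j * \<sigma> i j)) * monom m Z Zi (\<lambda>i. k i + l i)"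
  using assms
proof (induction m)
  case 0
  show ?case by (simp add: monom_def)
next
  case (Suc m)
  let ?M = "\<lambda>k. monom m Z Zi k" and ?X = "\<lambda>p. zpow Z Zi m p"
  let ?c = "\<Sum>j<m. k m * l j * (2 * \<sigma> m j)"
  let ?E = "2 * (\<Sum>i<m. \<Sum>j<i. k i * l j * \<sigma> i j)"
  have "monom (Suc m) Z Zi k * monom (Suc m) Z Zi l = ?M k * (?X (k m) * ?M l) * ?X (l m)"
    by (simp add: monom_Suc mult.assoc)
  also have "\<dots> = ?M k * (q ?c * ?M l * ?X (k m)) * ?X (l m)"
    using qcommute_zpow_monom[of m m "k m" l] Suc by (simp add: qcommute_def)
  also have "\<dots> = q ?c * ((?M k * ?M l) * (?X (k m) * ?X (l m)))"
    by (simp add: mult.assoc q_left_commute[of "?M k"])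
  also have "\<dots> = q ?c * (q ?E * ?M (\<lambda>i. k i + l i) * ?X (k m + l m))"
    using Suc zpow_add[where Z = Z and Zi = Zi and i = m, OF Z_Zi Zi_Z] by simp
  also have "\<dots> = q (?c + ?E) * monom (Suc m) Z Zi (\<lambda>i. k i + l i)"
    by (simp add: monom_Suc mult.assoc q_q_mult)
  also have "?c + ?E = 2 * (\<Sum>i<Suc m. \<Sum>j<i. k i * l j * \<sigma> i j)"
    by (simp add: sum_distrib_left algebra_simps)
  finally show ?case .
qed

lemma weyl_ordered_mult:
  assumes antisym: "\<And>i j. \<sigma> i j = - \<sigma> j i"
  shows "q (- weyl_exponent \<sigma> n k) * monom n Z Zi k * (q (- weyl_exponent \<sigma> n l) * monom n Z Zi l)
    = q (\<Sum>i<n. \<Sum>j<n. k i * l j * \<sigma> i j)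
      * (q (- weyl_exponent \<sigma> n (\<lambda>i. k i + l i)) * monom n Z Zi (\<lambda>i. k i + l i))"
proof -
  let ?E = "2 * (\<Sum>i<n. \<Sum>j<i. k i * l j * \<sigma> i j)"
  have "q (- weyl_exponent \<sigma> n k) * monom n Z Zi k * (q (- weyl_exponent \<sigma> n l) * monom n Z Zi l)
      = q (- weyl_exponent \<sigma> n k + (- weyl_exponent \<sigma> n l + ?E)) * monom n Z Zi (\<lambda>i. k i + l i)"
    by (simp add: mult.assoc q_left_commute[of "monom n Z Zi k"] monom_mult q_q_mult)
  also have "- weyl_exponent \<sigma> n k + (- weyl_exponent \<sigma> n l + ?E)
      = (\<Sum>i<n. \<Sum>j<n. k i * l j * \<sigma> i j) + - weyl_exponent \<sigma> n (\<lambda>i. k i + l i)"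
    using weyl_exponent_add[where \<sigma> = \<sigma> and m = n and k = k and l = l, OF antisym] by simp
  finally show ?thesis by (simp add: q_q_mult)
qed

end

lemma weyl_mult:
  assumes "quantum_torus (\<lambda>m. sc (\<omega> powi m)) n Z Zi \<sigma>"
    and "\<And>i j. \<sigma> i j = - \<sigma> j i"
  shows "weyl sc \<omega> \<sigma> n Z Zi k * weyl sc \<omega> \<sigma> n Z Zi l
    = sc (\<omega> powi (\<Sum>i<n. \<Sum>j<n. k i * l j * \<sigma> i j)) * weyl sc \<omega> \<sigma> n Z Zi (\<lambda>i. k i + l i)"
  using quantum_torus.weyl_ordered_mult[OF assms]
  by (simp add: weyl_def weyl_exponent_def)

lemma sum_card_fibres:
  fixes g :: "nat \<Rightarrow> nat \<Rightarrow> 'b::comm_semiring_1"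
  assumes "finite C" and "\<And>p. p \<in> C \<Longrightarrow> u p < n \<and> v p < n"
  shows "(\<Sum>i<n. \<Sum>j<n. g i j * of_nat (card {p \<in> C. u p = i \<and> v p = j}))
    = (\<Sum>p\<in>C. g (u p) (v p))"
proof -
  have "(\<Sum>p\<in>C. g (u p) (v p))
      = (\<Sum>y\<in>{..<n} \<times> {..<n}. \<Sum>p\<in>{p \<in> C. (u p, v p) = y}. g (u p) (v p))"
    using assms by (intro sum.group[symmetric]) auto
  also have "\<dots> = (\<Sum>(i, j)\<in>{..<n} \<times> {..<n}. g i j * of_nat (card {p \<in> C. u p = i \<and> v p = j}))"
  proof (intro sum.cong refl, clarify)
    fix i j
    have "(\<Sum>p\<in>{p \<in> C. (u p, v p) = (i, j)}. g (u p) (v p))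
        = (\<Sum>p\<in>{p \<in> C. u p = i \<and> v p = j}. g i j)"
      by (intro sum.cong) auto
    then show "(\<Sum>p\<in>{p \<in> C. (u p, v p) = (i, j)}. g (u p) (v p))
        = g i j * of_nat (card {p \<in> C. u p = i \<and> v p = j})"
      by (simp add: mult.commute)
  qed
  finally show ?thesis by (simp add: sum.cartesian_product)
qed

lemma sum_a_coef:
  assumes "finite F" and "\<forall>f\<in>F. \<forall>k<3. side f k < n"
  shows "(\<Sum>i<n. \<Sum>j<n. x i * y j * a_coef F side i j)
    = (\<Sum>f\<in>F. \<Sum>c<3. x (side f (nxt c)) * y (side f c))"
proof -
  have "nxt c < 3" for c by (simp add: nxt_def)
  then have "(\<Sum>i<n. \<Sum>j<n. x i * y j * a_coef F side i j)
      = (\<Sum>p\<in>F \<times> {..<3}. x (side (fst p) (nxt (snd p))) * y (side (fst p) (snd p)))"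
    using assms unfolding a_coef_def
    by (subst sum_card_fibres[symmetric]) (auto intro!: sum.cong arg_cong[where f = card])
  then show ?thesis by (simp add: sum.cartesian_product split_def)
qed

lemma sum_sigma:
  assumes "finite F" and "\<forall>f\<in>F. \<forall>k<3. side f k < n"
  shows "(\<Sum>i<n. \<Sum>j<n. x i * y j * sigma F side i j)
    = (\<Sum>f\<in>F. \<Sum>c<3. x (side f (nxt c)) * y (side f c) - x (side f c) * y (side f (nxt c)))"
proof -
  have "(\<Sum>i<n. \<Sum>j<n. x i * y j * a_coef F side j i)
      = (\<Sum>j<n. \<Sum>i<n. y j * x i * a_coef F side j i)"
    by (subst sum.swap) (simp add: mult.commute)
  also have "\<dots> = (\<Sum>f\<in>F. \<Sum>c<3. x (side f c) * y (side f (nxt c)))"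
    using sum_a_coef[OF assms, where x = y and y = x] by (simp add: mult.commute)
  finally show ?thesis
    by (simp add: sigma_def right_diff_distrib sum_subtractf sum_a_coef[OF assms])
qed

lemma sigma_antisym: "sigma F side i j = - sigma F side j i"
  by (simp add: sigma_def)

lemma thurston2_antisym: "thurston2 F b a = - thurston2 F a b"
  by (simp add: thurston2_def sum_negf[symmetric] algebra_simps)

lemma tt_alpha_side:
  assumes "tt_weight F side w" "f \<in> F" "k < 3"
  shows "tt_alpha F side w (side f k) = sw w f k"
proof -
  define p where "p = (SOME p. p \<in> face_sides F side (side f k))"
  have "(f, k) \<in> face_sides F side (side f k)"
    using assms by (simp add: face_sides_def)
  then have "p \<in> face_sides F side (side f k)"
    unfolding p_def by (rule someI)
  then have "fst p \<in> F" "snd p < 3" "side (fst p) (snd p) = side f k"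
    by (auto simp: face_sides_def)
  then have "sw w (fst p) (snd p) = sw w f k"
    using assms unfolding tt_weight_def by blast
  then show ?thesis
    by (simp add: tt_alpha_def p_def[symmetric] split_def)
qed

lemma sw_wadd: "sw (wadd a b) f k = sw a f k + sw b f k"
  by (simp add: sw_def wadd_def)

lemma tt_alpha_wadd: "tt_alpha F side (wadd a b) i = tt_alpha F side a i + tt_alpha F side b i"
  by (simp add: tt_alpha_def Let_def split_def sw_wadd)

lemma tt_weight_wadd:
  assumes "tt_weight F side a" "tt_weight F side b"
  shows "tt_weight F side (wadd a b)"
  unfolding tt_weight_def sw_wadd
proof (intro ballI allI impI)
  fix f g k l assume "f \<in> F" "k < 3" "g \<in> F" "l < 3" "side f k = side g l"
  with assms show "sw a f k + sw b f k = sw a g l + sw b g l"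
    unfolding tt_weight_def by metis
qed

lemma nxt_simps [simp]: "nxt 0 = 1" "nxt 1 = 2" "nxt 2 = 0"
  by (simp_all add: nxt_def)

lemma prv_simps [simp]: "prv 0 = 2" "prv 1 = 0" "prv 2 = 1"
  by (simp_all add: prv_def)

lemma sum_lessThan_3: "(\<Sum>c<3::nat. g c) = g 0 + g 1 + (g 2 :: 'b::comm_monoid_add)"
proof -
  have "{..<3::nat} = {0, 1, 2}" by auto
  then show ?thesis by (simp add: add.assoc)
qed

lemma face_sigma_eq_thurston:
  "(\<Sum>c<3. sw a f (nxt c) * sw b f c - sw a f c * sw b f (nxt c))
    = (\<Sum>k<3. a f k * b f (prv k) - a f (prv k) * b f k)"
  unfolding sum_lessThan_3 by (simp only: nxt_simps prv_simps sw_def) (simp add: algebra_simps)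

lemma balanced_tt_alpha:
  assumes "tt_weight F side w" shows "balanced F side (tt_alpha F side w)"
  unfolding balanced_def
proof
  fix f assume "f \<in> F"
  note alpha = tt_alpha_side[OF assms this]
  have "tt_alpha F side w (side f 0) + tt_alpha F side w (side f 1) + tt_alpha F side w (side f 2)
      = 2 * (w f 0 + w f 1 + w f 2)"
    using alpha[of 0] alpha[of 1] alpha[of 2] by (simp only: sw_def prv_simps) simp
  then show "even (tt_alpha F side w (side f 0) + tt_alpha F side w (side f 1) + tt_alpha F side w (side f 2))"
    by simp
qed

lemma sigma_form_eq_thurston2:
  assumes "finite F" and "\<forall>f\<in>F. \<forall>k<3. side f k < n"
    and "tt_weight F side a" "tt_weight F side b"
  shows "(\<Sum>i<n. \<Sum>j<n. tt_alpha F side a i * tt_alpha F side b j * sigma F side i j) = thurston2 F a b"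
proof -
  have "nxt c < 3" for c by (simp add: nxt_def)
  then have "sw a f (nxt c) * sw b f c - sw a f c * sw b f (nxt c)
      = tt_alpha F side a (side f (nxt c)) * tt_alpha F side b (side f c)
        - tt_alpha F side a (side f c) * tt_alpha F side b (side f (nxt c))" if "f \<in> F" "c < 3" for f c
    using that by (simp add: tt_alpha_side assms(3,4))
  then show ?thesis
    unfolding sum_sigma[OF assms(1,2)] thurston2_def
    by (simp add: face_sigma_eq_thurston[symmetric])
qed

theorem lemma3p2:
  fixes n :: nat and F :: "'f set" and side :: "'f \<Rightarrow> nat \<Rightarrow> nat"
    and \<omega> :: complex and sc :: "complex \<Rightarrow> 'a::ring_1"
    and Z Zi :: "nat \<Rightarrow> 'a" and a b :: "'f \<Rightarrow> nat \<Rightarrow> int"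
  assumes tri: "ideal_triangulation n F side"
    and om: "\<omega> \<noteq> 0"
    and sc: "is_scalar_hom sc"
    and inv: "\<forall>i<n. Z i * Zi i = 1 \<and> Zi i * Z i = 1"
    and rel: "\<forall>i<n. \<forall>j<n. Z i * Z j = sc (\<omega> powi (2 * sigma F side i j)) * Z j * Z i"
    and wa: "tt_weight F side a"
    and wb: "tt_weight F side b"
  shows "balanced F side (tt_alpha F side a)
       \<and> balanced F side (tt_alpha F side b)
       \<and> balanced F side (tt_alpha F side (wadd a b))
       \<and> weyl sc \<omega> (sigma F side) n Z Zi (tt_alpha F side a) * weyl sc \<omega> (sigma F side) n Z Zi (tt_alpha F side b)
           = sc (\<omega> powi (thurston2 F a b)) * weyl sc \<omega> (sigma F side) n Z Zi (tt_alpha F side (wadd a b))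
       \<and> weyl sc \<omega> (sigma F side) n Z Zi (tt_alpha F side a) * weyl sc \<omega> (sigma F side) n Z Zi (tt_alpha F side b)
           = sc (\<omega> powi (2 * thurston2 F a b)) * weyl sc \<omega> (sigma F side) n Z Zi (tt_alpha F side b) * weyl sc \<omega> (sigma F side) n Z Zi (tt_alpha F side a)"
proof -
  define \<alpha> \<beta> where "\<alpha> = tt_alpha F side a" and "\<beta> = tt_alpha F side b"
  define W where "W = weyl sc \<omega> (sigma F side) n Z Zi"
  define q where "q m = sc (\<omega> powi m)" for m
  define T where "T = thurston2 F a b"
  interpret central_character q
    unfolding q_def by (rule central_character_powi[OF sc om])
  have qt: "quantum_torus q n Z Zi (sigma F side)"
    using inv rel by unfold_locales (simp_all add: q_def)
  from tri have finite: "finite F" and bounded: "\<forall>f\<in>F. \<forall>k<3. side f k < n"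
    unfolding ideal_triangulation_def by blast+
  have sum: "tt_alpha F side (wadd a b) = (\<lambda>i. \<alpha> i + \<beta> i)"
    by (simp add: fun_eq_iff tt_alpha_wadd \<alpha>_def \<beta>_def)
  have ab: "W \<alpha> * W \<beta> = q T * W (\<lambda>i. \<alpha> i + \<beta> i)"
    using weyl_mult[OF qt[unfolded q_def] sigma_antisym, of \<alpha> \<beta>]
      sigma_form_eq_thurston2[OF finite bounded wa wb]
    by (simp add: W_def q_def \<alpha>_def \<beta>_def T_def)
  have ba: "W \<beta> * W \<alpha> = q (- T) * W (\<lambda>i. \<alpha> i + \<beta> i)"
    using weyl_mult[OF qt[unfolded q_def] sigma_antisym, of \<beta> \<alpha>]
      sigma_form_eq_thurston2[OF finite bounded wb wa] thurston2_antisym[of F a b]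
    by (simp add: W_def q_def \<alpha>_def \<beta>_def T_def add.commute)
  have "W \<alpha> * W \<beta> = q (2 * T) * (W \<beta> * W \<alpha>)"
    by (simp add: ab ba q_q_mult)
  with ab show ?thesis
    using balanced_tt_alpha[OF wa] balanced_tt_alpha[OF wb]
      balanced_tt_alpha[OF tt_weight_wadd[OF wa wb]]
    by (simp add: sum mult.assoc W_def q_def \<alpha>_def \<beta>_def T_def)
qed

end
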